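(* Let $D$ be a fixed integer which is not a perfect square and let $\mathcal{Q}$ denote the set of squares in $\mathbb{Q}$. For every $\varepsilon>0$ and $N\geq 1$, \[ \#\{(A,B)\in\mathbb{Z}^2:\ |A|,|B|\leq N,\ -AB\in\mathcal{Q}\}\ll_\varepsilon N^{1+\varepsilon}, \] and \[ \#\{(A,B)\in\mathbb{Z}^2:\ |A|,|B|\leq N,\ D\big((A+B-1)^2-4AB\big)\in\mathcal{Q}\}\ll_\varepsilon |D|^{\varepsilon}N^{1+\varepsilon}. \] *)

theory Defs
  imports Complex_Main
begin

definition rat_square :: "int \<Rightarrow> bool" where
  "rat_square x \<longleftrightarrow> (\<exists>q::rat. of_int x = q ^ 2)"

definition count1 :: "real \<Rightarrow> nat" where
  "count1 N = card {(A::int, B::int). \<bar>real_of_int A\<bar> \<le> N \<and> \<bar>real_of_int B\<bar> \<le> N \<and> rat_square (- A * B)}"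

definition count2 :: "int \<Rightarrow> real \<Rightarrow> nat" where
  "count2 D N = card {(A::int, B::int). \<bar>real_of_int A\<bar> \<le> N \<and> \<bar>real_of_int B\<bar> \<le> N \<and>
       rat_square (D * ((A + B - 1) ^ 2 - 4 * A * B))}"

end

theory Submission
  imports Defs "HOL-Computational_Algebra.Squarefree" "HOL-Analysis.Harmonic_Numbers"
begin

text \<open>
  If \<open>-AB\<close> is a nonzero square then \<open>A = d f\<^sup>2\<close> and \<open>B = -d z\<^sup>2\<close> with \<open>d\<close> the squarefree
  part of \<open>A\<close>, so the pairs are parametrised by triples with \<open>|d| f\<^sup>2, |d| z\<^sup>2 \<le> N\<close>; for fixed
  \<open>d\<close> there are \<open>O(N / |d|)\<close> pairs \<open>(f, z)\<close>, and summing over \<open>d\<close> gives \<open>O(N log N)\<close>.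

  For the second set let \<open>d\<close> be the squarefree part of \<open>D\<close>. If \<open>D((A + B - 1)\<^sup>2 - 4AB)\<close> is a
  square then \<open>(A + B - 1)\<^sup>2 - 4AB = d z\<^sup>2\<close>, which for \<open>u = A - B\<close> reads
  \<open>u\<^sup>2 - d z\<^sup>2 = 2(A + B) - 1\<close>. So \<open>(A, B)\<close> is determined by a pair \<open>(z, u)\<close> with
  \<open>|z| = O(N)\<close> and \<open>|u\<^sup>2 - d z\<^sup>2| \<le> M = O(N)\<close>. When \<open>d z\<^sup>2 \<le> 2M\<close> both coordinates are
  \<open>O(\<surd>M)\<close>; otherwise \<open>u\<^sup>2\<close> lies in an interval of length \<open>2M\<close> around \<open>d z\<^sup>2 \<ge> z\<^sup>2\<close>, leaving
  \<open>O(M / |z| + 1)\<close> choices of \<open>u\<close>, and summing over \<open>z\<close> again gives \<open>O(N log N)\<close>, uniformly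
  in \<open>D\<close>. Finally \<open>N log N \<le> (1 + 1/\<epsilon>) N\<^bsup>1+\<epsilon>\<^esup>\<close>.
\<close>

section \<open>Rational squares and squarefree parts\<close>

lemma rat_square_iff_int_square: "rat_square x \<longleftrightarrow> (\<exists>m::int. x = m^2)"
proof
  assume "rat_square x"
  then obtain q :: rat where q: "of_int x = q^2" unfolding rat_square_def by auto
  obtain a b where ab: "quotient_of q = (a, b)" by (cases "quotient_of q")
  have b: "b > 0" using ab quotient_of_denom_pos by blast
  have coprime: "coprime a b" using ab quotient_of_coprime by blast
  have "q = of_int a / of_int b" using ab quotient_of_div by blast
  with q b have "of_int (x * b^2) = (of_int (a^2) :: rat)" by (simp add: field_simps power2_eq_square)
  hence x: "x * b^2 = a^2" by (simp only: of_int_eq_iff)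
  hence "b^2 dvd a^2" by (metis dvd_triv_right)
  hence "b dvd a" by simp
  with coprime b have "b = 1" by (metis coprime_absorb_right zdvd1_eq abs_of_pos)
  with x show "\<exists>m::int. x = m^2" by auto
next
  assume "\<exists>m::int. x = m^2"
  then show "rat_square x" unfolding rat_square_def by (auto intro: exI[of _ "of_int m" for m])
qed

lemma squarefree_dvd_square_imp_dvd:
  fixes s k :: "'a :: factorial_semiring"
  assumes "squarefree s" "s dvd k^2"
  shows "s dvd k"
proof (cases "k = 0")
  case False
  have "s \<noteq> 0" using assms(1) by auto
  then show ?thesis
  proof (rule multiplicity_le_imp_dvd)
    fix p :: 'a assume p: "prime p"
    show "multiplicity p s \<le> multiplicity p k"
    proof (cases "p dvd s")
      case True
      with assms(2) p have "p dvd k" using dvd_trans prime_dvd_power by blast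
      with p False have "multiplicity p k \<ge> 1"
        using prime_elem_multiplicity_eq_zero_iff by (metis One_nat_def Suc_leI bot_nat_0.not_eq_extremum prime_imp_prime_elem)
      moreover have "multiplicity p s \<le> 1"
        using squarefree_factorial_semiring''[OF \<open>s \<noteq> 0\<close>] assms(1) p by auto
      ultimately show ?thesis by linarith
    qed (simp add: not_dvd_imp_multiplicity_0)
  qed
qed simp

lemma square_cofactor_squarefree_part:
  fixes D w k :: int
  assumes "D \<noteq> 0" "D * w = k^2"
  obtains z where "w = squarefree_part D * z^2"
proof -
  define s where "s = squarefree_part D"
  define f where "f = square_part D"
  have D: "D = s * f^2" unfolding s_def f_def by (rule squarefree_decompose)
  with assms(1) have f: "f \<noteq> 0" by auto
  from assms(2) D have "f^2 dvd k^2" by (metis dvd_triv_left mult.assoc mult.commute)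
  then obtain j where j: "k = f * j" by auto
  from assms(2) D have "f^2 * (s * w) = f^2 * j^2" by (simp add: j algebra_simps power_mult_distrib)
  with f have sw: "s * w = j^2" by simp
  have "s dvd j"
    by (rule squarefree_dvd_square_imp_dvd) (simp_all add: s_def sw[symmetric])
  then obtain z where "j = s * z" by auto
  with sw have "s * w = s * (s * z^2)" by (simp add: power2_eq_square algebra_simps)
  then have "w = s * z^2" by (simp add: s_def)
  then show thesis using that s_def by blast
qed

section \<open>Counting integers\<close>

lemma int_squares_le_eq:
  assumes "X \<ge> 0"
  shows "{f::int. real_of_int f ^ 2 \<le> X} = {-\<lfloor>sqrt X\<rfloor>..\<lfloor>sqrt X\<rfloor>}"
proof -
  have "real_of_int f ^ 2 \<le> X \<longleftrightarrow> -\<lfloor>sqrt X\<rfloor> \<le> f \<and> f \<le> \<lfloor>sqrt X\<rfloor>" for f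
  proof -
    have "real_of_int f ^ 2 \<le> X \<longleftrightarrow> \<bar>real_of_int f\<bar> \<le> sqrt X"
      using assms by (metis real_sqrt_abs real_sqrt_le_iff)
    also have "\<dots> \<longleftrightarrow> \<bar>f\<bar> \<le> \<lfloor>sqrt X\<rfloor>" by (simp add: le_floor_iff)
    also have "\<dots> \<longleftrightarrow> -\<lfloor>sqrt X\<rfloor> \<le> f \<and> f \<le> \<lfloor>sqrt X\<rfloor>" by (auto simp: abs_le_iff)
    finally show ?thesis .
  qed
  then show ?thesis by (simp add: set_eq_iff)
qed

lemma finite_int_squares_le: "finite {f::int. real_of_int f ^ 2 \<le> X}"
proof (cases "X \<ge> 0")
  case False
  then have "{f::int. real_of_int f ^ 2 \<le> X} = {}"
    by (auto simp: not_le intro: less_le_trans[OF _ zero_le_power2])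
  then show ?thesis by simp
qed (simp add: int_squares_le_eq)

lemma card_int_squares_le:
  assumes "X \<ge> 1"
  shows "real (card {f::int. real_of_int f ^ 2 \<le> X}) \<le> 3 * sqrt X"
proof -
  have "real (card {f::int. real_of_int f ^ 2 \<le> X}) = 2 * of_int \<lfloor>sqrt X\<rfloor> + 1"
    using assms by (simp add: int_squares_le_eq)
  also have "\<dots> \<le> 2 * sqrt X + sqrt X"
    using of_int_floor_le[of "sqrt X"] real_sqrt_ge_one[OF assms] by linarith
  finally show ?thesis by simp
qed

lemma card_int_abs_between_le:
  assumes "0 \<le> lo" "lo \<le> hi"
  shows "finite {u::int. lo \<le> \<bar>real_of_int u\<bar> \<and> \<bar>real_of_int u\<bar> \<le> hi}"
    and "real (card {u::int. lo \<le> \<bar>real_of_int u\<bar> \<and> \<bar>real_of_int u\<bar> \<le> hi}) \<le> 2 * (hi - lo + 1)"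
proof -
  define I where "I = {\<lceil>lo\<rceil>..\<lfloor>hi\<rfloor>}"
  have I: "x \<in> I \<longleftrightarrow> lo \<le> real_of_int x \<and> real_of_int x \<le> hi" for x
    by (simp add: I_def ceiling_le_iff le_floor_iff)
  have eq: "{u::int. lo \<le> \<bar>real_of_int u\<bar> \<and> \<bar>real_of_int u\<bar> \<le> hi} = I \<union> uminus ` I"
  proof (intro set_eqI iffI)
    fix u :: int assume "u \<in> I \<union> uminus ` I"
    with assms show "u \<in> {u. lo \<le> \<bar>real_of_int u\<bar> \<and> \<bar>real_of_int u\<bar> \<le> hi}"
      by (auto simp: I)
  next
    fix u :: int assume u: "u \<in> {u. lo \<le> \<bar>real_of_int u\<bar> \<and> \<bar>real_of_int u\<bar> \<le> hi}"
    show "u \<in> I \<union> uminus ` I"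
    proof (cases "u \<ge> 0")
      case False
      with u have "- u \<in> I" by (simp add: I)
      then show ?thesis by (auto intro: image_eqI[of _ _ "- u"])
    qed (use u in \<open>simp add: I\<close>)
  qed
  show "finite {u::int. lo \<le> \<bar>real_of_int u\<bar> \<and> \<bar>real_of_int u\<bar> \<le> hi}"
    unfolding eq I_def by simp
  have card_I: "real (card I) \<le> hi - lo + 1"
  proof (cases "\<lceil>lo\<rceil> \<le> \<lfloor>hi\<rfloor>")
    case True
    then have "real (card I) = of_int \<lfloor>hi\<rfloor> - of_int \<lceil>lo\<rceil> + 1" by (simp add: I_def)
    then show ?thesis using of_int_floor_le[of hi] le_of_int_ceiling[of lo] by linarith
  qed (use assms in \<open>simp add: I_def\<close>)
  have "card (I \<union> uminus ` I) \<le> 2 * card I"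
    using card_Un_le[of I "uminus ` I"] card_image_le[of I uminus] by (simp add: I_def)
  then have "real (card (I \<union> uminus ` I)) \<le> 2 * real (card I)" by linarith
  also have "\<dots> \<le> 2 * (hi - lo + 1)" using card_I by simp
  finally show "real (card {u::int. lo \<le> \<bar>real_of_int u\<bar> \<and> \<bar>real_of_int u\<bar> \<le> hi}) \<le> 2 * (hi - lo + 1)"
    unfolding eq .
qed

lemma card_int_squares_between_le:
  fixes a M :: real
  assumes M: "0 < M" and a: "2 * M < a"
  shows "finite {u::int. a - M \<le> real_of_int u ^ 2 \<and> real_of_int u ^ 2 \<le> a + M}"
    and "real (card {u::int. a - M \<le> real_of_int u ^ 2 \<and> real_of_int u ^ 2 \<le> a + M})
           \<le> 4 * M / sqrt a + 2"
proof -
  define lo hi where "lo = sqrt (a - M)" and "hi = sqrt (a + M)"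
  have bounds: "0 \<le> lo" "lo \<le> hi" "sqrt a \<le> hi" using assms by (simp_all add: lo_def hi_def)
  have "sqrt c \<le> \<bar>x\<bar> \<longleftrightarrow> c \<le> x^2" "\<bar>x\<bar> \<le> sqrt c \<longleftrightarrow> x^2 \<le> c" for c x :: real
    by (metis real_sqrt_abs real_sqrt_le_iff)+
  then have eq: "{u::int. a - M \<le> real_of_int u ^ 2 \<and> real_of_int u ^ 2 \<le> a + M}
      = {u::int. lo \<le> \<bar>real_of_int u\<bar> \<and> \<bar>real_of_int u\<bar> \<le> hi}"
    by (simp add: lo_def hi_def)
  show "finite {u::int. a - M \<le> real_of_int u ^ 2 \<and> real_of_int u ^ 2 \<le> a + M}"
    unfolding eq by (rule card_int_abs_between_le(1)[OF bounds(1,2)])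
  have "(hi - lo) * (hi + lo) = 2 * M"
    using assms by (simp add: lo_def hi_def algebra_simps)
  moreover have "(hi - lo) * sqrt a \<le> (hi - lo) * (hi + lo)"
    using bounds by (intro mult_left_mono) auto
  ultimately have "2 * (hi - lo + 1) \<le> 4 * M / sqrt a + 2"
    using assms by (simp add: field_simps)
  with card_int_abs_between_le(2)[OF bounds(1,2)]
  show "real (card {u::int. a - M \<le> real_of_int u ^ 2 \<and> real_of_int u ^ 2 \<le> a + M})
          \<le> 4 * M / sqrt a + 2"
    unfolding eq by linarith
qed

lemma sum_inverse_abs_symmetric:
  "(\<Sum>z\<in>{-int m..int m} - {0}. 1 / \<bar>real_of_int z\<bar>) = 2 * harm m"
proof -
  have split: "{-int m..int m} - {0} = int ` {1..m} \<union> uminus ` int ` {1..m}"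
  proof (intro set_eqI iffI)
    fix z assume z: "z \<in> {-int m..int m} - {0}"
    show "z \<in> int ` {1..m} \<union> uminus ` int ` {1..m}"
    proof (cases "z > 0")
      case True
      with z show ?thesis by (auto intro!: image_eqI[of _ _ "nat z"])
    next
      case False
      with z have "- z \<in> int ` {1..m}" by (auto intro!: image_eqI[of _ _ "nat (- z)"])
      then show ?thesis by (auto intro: image_eqI[of _ _ "- z"])
    qed
  qed auto
  have "(\<Sum>z\<in>int ` {1..m}. 1 / \<bar>real_of_int z\<bar>) = harm m"
    by (simp add: sum.reindex harm_def divide_inverse)
  moreover have "(\<Sum>z\<in>uminus ` int ` {1..m}. 1 / \<bar>real_of_int z\<bar>) = harm m"
    by (simp add: sum.reindex image_image harm_def divide_inverse inj_on_def)
  ultimately show ?thesis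
    unfolding split by (subst sum.union_disjoint) auto
qed

lemma harm_le_one_plus_ln: "n \<ge> 1 \<Longrightarrow> harm n \<le> 1 + ln (real n)"
  using euler_mascheroni_sequence_decreasing[of 1 n] by (simp add: harm_def)

lemma harm_double_plus_one_le:
  assumes "n \<ge> 1"
  shows "harm (2 * n + 1) \<le> 3 + ln (real n)"
proof -
  have "harm (2 * n + 1) \<le> 1 + ln (real (2 * n + 1))" by (rule harm_le_one_plus_ln) simp
  also have "ln (real (2 * n + 1)) \<le> ln (3 * real n)" using assms by simp
  also have "\<dots> = ln 3 + ln (real n)" using assms by (simp add: ln_mult)
  also have "ln (3::real) \<le> 2" using ln_le_minus_one[of 3] by simp
  finally show ?thesis by simp
qed

section \<open>Products that are squares\<close>

lemma neg_product_square_param: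
  fixes A B m :: int
  assumes "A \<noteq> 0" "- A * B = m^2"
  obtains d f z where "d \<noteq> 0" "A = d * f^2" "B = - d * z^2"
proof -
  obtain z where "- B = squarefree_part A * z^2"
    using square_cofactor_squarefree_part[of A "- B" m] assms by auto
  then show thesis
    using that[of "squarefree_part A" "square_part A" z] squarefree_decompose[of A] by simp
qed

lemma card_scaled_square_triples_le:
  fixes n :: nat
  shows "finite {(d::int, f::int, z::int). d \<noteq> 0 \<and> \<bar>d\<bar> \<le> int n \<and> \<bar>d\<bar> * f^2 \<le> int n \<and> \<bar>d\<bar> * z^2 \<le> int n}"
    and "real (card {(d::int, f::int, z::int). d \<noteq> 0 \<and> \<bar>d\<bar> \<le> int n \<and> \<bar>d\<bar> * f^2 \<le> int n \<and> \<bar>d\<bar> * z^2 \<le> int n})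
           \<le> 18 * real n * harm n"
proof -
  define R where "R = {-int n..int n} - {0}"
  define F where "F d = {f::int. real_of_int f ^ 2 \<le> real n / \<bar>real_of_int d\<bar>}" for d :: int
  have F_iff: "f \<in> F d \<longleftrightarrow> \<bar>d\<bar> * f^2 \<le> int n" if "d \<noteq> 0" for d f
  proof -
    have "\<bar>d\<bar> * f^2 \<le> int n \<longleftrightarrow> real_of_int (\<bar>d\<bar> * f^2) \<le> real_of_int (int n)"
      by (simp only: of_int_le_iff)
    with that show ?thesis by (simp add: F_def field_simps)
  qed
  have eq: "{(d::int, f::int, z::int). d \<noteq> 0 \<and> \<bar>d\<bar> \<le> int n \<and> \<bar>d\<bar> * f^2 \<le> int n \<and> \<bar>d\<bar> * z^2 \<le> int n}
      = (SIGMA d:R. F d \<times> F d)"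
    by (auto simp: R_def F_iff abs_le_iff)
  have F_card: "real (card (F d \<times> F d)) \<le> 9 * real n / \<bar>real_of_int d\<bar>" if "d \<in> R" for d
  proof -
    from that have X: "real n / \<bar>real_of_int d\<bar> \<ge> 1"
      by (auto simp: R_def abs_le_iff simp flip: of_int_abs)
    have "real (card (F d)) \<le> 3 * sqrt (real n / \<bar>real_of_int d\<bar>)"
      unfolding F_def by (rule card_int_squares_le[OF X])
    then have "real (card (F d)) ^ 2 \<le> (3 * sqrt (real n / \<bar>real_of_int d\<bar>)) ^ 2"
      by (intro power_mono) auto
    with X show ?thesis by (simp add: card_cartesian_product power2_eq_square)
  qed
  have fin: "finite (F d)" for d unfolding F_def by (rule finite_int_squares_le)
  show "finite {(d::int, f::int, z::int). d \<noteq> 0 \<and> \<bar>d\<bar> \<le> int n \<and> \<bar>d\<bar> * f^2 \<le> int n \<and> \<bar>d\<bar> * z^2 \<le> int n}"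
    unfolding eq R_def using fin by auto
  have "real (card (SIGMA d:R. F d \<times> F d)) = (\<Sum>d\<in>R. real (card (F d \<times> F d)))"
    using fin by (simp add: card_SigmaI R_def)
  also have "\<dots> \<le> (\<Sum>d\<in>R. 9 * real n * (1 / \<bar>real_of_int d\<bar>))"
    using F_card by (intro sum_mono) simp
  also have "\<dots> = 9 * real n * (\<Sum>d\<in>R. 1 / \<bar>real_of_int d\<bar>)"
    by (simp only: sum_distrib_left)
  also have "\<dots> = 18 * real n * harm n"
    by (simp add: R_def sum_inverse_abs_symmetric)
  finally show "real (card {(d::int, f::int, z::int). d \<noteq> 0 \<and> \<bar>d\<bar> \<le> int n \<and> \<bar>d\<bar> * f^2 \<le> int n \<and> \<bar>d\<bar> * z^2 \<le> int n})
           \<le> 18 * real n * harm n"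
    unfolding eq .
qed

lemma neg_product_squares_subset:
  fixes n :: nat
  shows "{(A::int, B::int). \<bar>A\<bar> \<le> int n \<and> \<bar>B\<bar> \<le> int n \<and> (\<exists>m. - A * B = m^2)}
    \<subseteq> {0} \<times> {-int n..int n} \<union> (\<lambda>(d, f, z). (d * f^2, - d * z^2)) `
          {(d::int, f::int, z::int). d \<noteq> 0 \<and> \<bar>d\<bar> \<le> int n \<and> \<bar>d\<bar> * f^2 \<le> int n \<and> \<bar>d\<bar> * z^2 \<le> int n}"
    (is "?S \<subseteq> ?Z \<union> ?g ` ?T")
proof
  fix p assume "p \<in> ?S"
  then obtain A B m where p: "p = (A, B)"
    and A: "\<bar>A\<bar> \<le> int n" and B: "\<bar>B\<bar> \<le> int n" and m: "- A * B = m^2" by blast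
  show "p \<in> ?Z \<union> ?g ` ?T"
  proof (cases "A = 0")
    case True
    with B show ?thesis by (simp add: p abs_le_iff)
  next
    case False
    then obtain d f z where d: "d \<noteq> 0" and Adf: "A = d * f^2" and Bdz: "B = - d * z^2"
      using neg_product_square_param m by metis
    with False have "f^2 > 0" by simp
    then have "f^2 \<ge> 1" by linarith
    then have "\<bar>d\<bar> \<le> \<bar>d\<bar> * f^2" by (simp add: mult_le_cancel_left1)
    moreover have "\<bar>A\<bar> = \<bar>d\<bar> * f^2" "\<bar>B\<bar> = \<bar>d\<bar> * z^2" by (simp_all add: Adf Bdz abs_mult)
    ultimately have "\<bar>d\<bar> \<le> int n" "\<bar>d\<bar> * f^2 \<le> int n" "\<bar>d\<bar> * z^2 \<le> int n"
      using A B by linarith+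
    with d have "(d, f, z) \<in> ?T" by simp
    moreover have "p = ?g (d, f, z)" by (simp add: p Adf Bdz)
    ultimately show ?thesis by blast
  qed
qed

lemma card_neg_product_squares_le:
  fixes n :: nat
  shows "real (card {(A::int, B::int). \<bar>A\<bar> \<le> int n \<and> \<bar>B\<bar> \<le> int n \<and> (\<exists>m. - A * B = m^2)})
           \<le> 2 * real n + 1 + 18 * real n * harm n"
proof -
  define T where "T = {(d::int, f::int, z::int). d \<noteq> 0 \<and> \<bar>d\<bar> \<le> int n \<and> \<bar>d\<bar> * f^2 \<le> int n \<and> \<bar>d\<bar> * z^2 \<le> int n}"
  define g where "g = (\<lambda>(d::int, f::int, z::int). (d * f^2, - d * z^2))"
  have fin: "finite T" unfolding T_def by (rule card_scaled_square_triples_le(1))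
  have "card {(A::int, B::int). \<bar>A\<bar> \<le> int n \<and> \<bar>B\<bar> \<le> int n \<and> (\<exists>m. - A * B = m^2)}
      \<le> card ({0::int} \<times> {-int n..int n} \<union> g ` T)"
    by (rule card_mono[OF _ neg_product_squares_subset[of n, folded T_def g_def]]) (simp add: fin)
  also have "\<dots> \<le> card ({0::int} \<times> {-int n..int n}) + card (g ` T)"
    by (rule card_Un_le)
  also have "\<dots> \<le> (2 * n + 1) + card T"
    using card_image_le[OF fin, of g] by (simp add: card_cartesian_product)
  finally have "real (card {(A::int, B::int). \<bar>A\<bar> \<le> int n \<and> \<bar>B\<bar> \<le> int n \<and> (\<exists>m. - A * B = m^2)})
      \<le> real (2 * n + 1 + card T)"
    by (simp only: of_nat_le_iff)
  then show ?thesis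
    using card_scaled_square_triples_le(2)[of n] unfolding T_def by simp
qed

section \<open>Small values of \<open>u\<^sup>2 - d z\<^sup>2\<close>\<close>

lemma card_small_norm_near_le:
  fixes d M :: int
  assumes d: "d \<noteq> 0" and M: "M \<ge> 1"
  shows "finite {(z::int, u::int). \<bar>u^2 - d * z^2\<bar> \<le> M \<and> d * z^2 \<le> 2 * M}"
    and "real (card {(z::int, u::int). \<bar>u^2 - d * z^2\<bar> \<le> M \<and> d * z^2 \<le> 2 * M}) \<le> 27 * real_of_int M"
proof -
  define X where "X = {z::int. real_of_int z ^ 2 \<le> 2 * real_of_int M}"
  define Y where "Y = {u::int. real_of_int u ^ 2 \<le> 3 * real_of_int M}"
  have sub: "{(z::int, u::int). \<bar>u^2 - d * z^2\<bar> \<le> M \<and> d * z^2 \<le> 2 * M} \<subseteq> X \<times> Y"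
  proof clarify
    fix z u :: int assume near: "\<bar>u^2 - d * z^2\<bar> \<le> M" "d * z^2 \<le> 2 * M"
    have "1 \<le> \<bar>d\<bar>" using d by (simp add: int_one_le_iff_zero_less)
    then have "z^2 \<le> \<bar>d\<bar> * z^2" using mult_right_mono[of 1 "\<bar>d\<bar>" "z^2"] by simp
    moreover have "\<bar>d * z^2\<bar> \<le> 2 * M"
      using near zero_le_power2[of u] M unfolding abs_le_iff by linarith
    ultimately have "real_of_int (z^2) \<le> real_of_int (2 * M)" by (simp only: of_int_le_iff abs_mult) simp
    moreover have "real_of_int (u^2) \<le> real_of_int (3 * M)"
      using near unfolding of_int_le_iff abs_le_iff by linarith
    ultimately show "z \<in> X \<and> u \<in> Y" unfolding X_def Y_def by simp
  qed
  have fin: "finite X" "finite Y" unfolding X_def Y_def by (rule finite_int_squares_le)+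
  then show "finite {(z::int, u::int). \<bar>u^2 - d * z^2\<bar> \<le> M \<and> d * z^2 \<le> 2 * M}"
    using sub finite_subset by blast
  have "real (card {(z::int, u::int). \<bar>u^2 - d * z^2\<bar> \<le> M \<and> d * z^2 \<le> 2 * M}) \<le> real (card X) * real (card Y)"
    using card_mono[OF _ sub] fin by (simp add: card_cartesian_product flip: of_nat_mult)
  also have "\<dots> \<le> (3 * sqrt (2 * real_of_int M)) * (3 * sqrt (3 * real_of_int M))"
    unfolding X_def Y_def using M by (intro mult_mono card_int_squares_le) auto
  also have "\<dots> = 9 * sqrt (6 * real_of_int M ^ 2)"
    by (simp add: real_sqrt_mult[symmetric] power2_eq_square)
  also have "\<dots> = 9 * sqrt 6 * real_of_int M"
    using M by (simp add: real_sqrt_mult)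
  also have "\<dots> \<le> 27 * real_of_int M"
    using M by (simp add: real_sqrt_le_iff[of 6 9, simplified])
  finally show "real (card {(z::int, u::int). \<bar>u^2 - d * z^2\<bar> \<le> M \<and> d * z^2 \<le> 2 * M}) \<le> 27 * real_of_int M" .
qed

lemma card_int_squares_near_le:
  fixes d z M :: int
  assumes M: "M \<ge> 1" and far: "2 * M < d * z^2"
  shows "finite {u::int. \<bar>u^2 - d * z^2\<bar> \<le> M}"
    and "real (card {u::int. \<bar>u^2 - d * z^2\<bar> \<le> M}) \<le> 4 * M / \<bar>real_of_int z\<bar> + 2"
proof -
  define a where "a = real_of_int (d * z^2)"
  have eq: "{u::int. \<bar>u^2 - d * z^2\<bar> \<le> M} = {u::int. a - M \<le> real_of_int u ^ 2 \<and> real_of_int u ^ 2 \<le> a + M}"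
  proof -
    have "\<bar>u^2 - d * z^2\<bar> \<le> M \<longleftrightarrow> a - M \<le> real_of_int u ^ 2 \<and> real_of_int u ^ 2 \<le> a + M" for u
    proof -
      have "\<bar>u^2 - d * z^2\<bar> \<le> M \<longleftrightarrow> real_of_int \<bar>u^2 - d * z^2\<bar> \<le> real_of_int M"
        by (simp only: of_int_le_iff)
      also have "\<dots> \<longleftrightarrow> \<bar>real_of_int u ^ 2 - a\<bar> \<le> real_of_int M" by (simp add: a_def)
      also have "\<dots> \<longleftrightarrow> a - M \<le> real_of_int u ^ 2 \<and> real_of_int u ^ 2 \<le> a + M" by (auto simp: abs_le_iff)
      finally show ?thesis .
    qed
    then show ?thesis by blast
  qed
  have "real_of_int (2 * M) < a" unfolding a_def using far by (simp only: of_int_less_iff)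
  then have a: "2 * real_of_int M < a" by simp
  from far M have "0 < d * z^2" by linarith
  then have z: "z \<noteq> 0" and "d \<ge> 1" by (auto simp: zero_less_mult_iff)
  then have "real_of_int (z^2) \<le> a"
    unfolding a_def using mult_right_mono[of 1 d "z^2"] by (simp only: of_int_le_iff) simp
  then have "\<bar>real_of_int z\<bar> \<le> sqrt a"
    by (metis of_int_power real_sqrt_abs real_sqrt_le_mono)
  moreover have "0 < \<bar>real_of_int z\<bar>" "0 \<le> 4 * real_of_int M" using z M by simp_all
  ultimately have "4 * M / sqrt a \<le> 4 * M / \<bar>real_of_int z\<bar>"
    by (intro frac_le) simp_all
  with card_int_squares_between_le[OF _ a] M
  show "finite {u::int. \<bar>u^2 - d * z^2\<bar> \<le> M}"
    and "real (card {u::int. \<bar>u^2 - d * z^2\<bar> \<le> M}) \<le> 4 * M / \<bar>real_of_int z\<bar> + 2"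
    unfolding eq by simp_all
qed

lemma card_small_norm_far_le:
  fixes d M :: int and m :: nat
  assumes M: "M \<ge> 1"
  shows "finite {(z::int, u::int). \<bar>z\<bar> \<le> int m \<and> \<bar>u^2 - d * z^2\<bar> \<le> M \<and> 2 * M < d * z^2}"
    and "real (card {(z::int, u::int). \<bar>z\<bar> \<le> int m \<and> \<bar>u^2 - d * z^2\<bar> \<le> M \<and> 2 * M < d * z^2})
           \<le> 8 * real_of_int M * harm m + 4 * real m"
proof -
  define R where "R = {-int m..int m} - {0}"
  define far where "far = {z \<in> R. 2 * M < d * z^2}"
  define W where "W z = {u::int. \<bar>u^2 - d * z^2\<bar> \<le> M}" for z
  have W: "finite (W z)" "real (card (W z)) \<le> 4 * M / \<bar>real_of_int z\<bar> + 2" if "z \<in> far" for z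
    using card_int_squares_near_le[OF M] that by (simp_all add: W_def far_def)
  have eq: "{(z::int, u::int). \<bar>z\<bar> \<le> int m \<and> \<bar>u^2 - d * z^2\<bar> \<le> M \<and> 2 * M < d * z^2}
      = (SIGMA z:far. W z)"
    using M by (auto simp: far_def R_def W_def abs_le_iff)
  have fin_far: "finite far" unfolding far_def R_def by (rule finite_subset[of _ "{-int m..int m}"]) auto
  then show "finite {(z::int, u::int). \<bar>z\<bar> \<le> int m \<and> \<bar>u^2 - d * z^2\<bar> \<le> M \<and> 2 * M < d * z^2}"
    unfolding eq using W by blast
  have "real (card (SIGMA z:far. W z)) = (\<Sum>z\<in>far. real (card (W z)))"
    using fin_far W by (simp add: card_SigmaI)
  also have "\<dots> \<le> (\<Sum>z\<in>far. 4 * M * (1 / \<bar>real_of_int z\<bar>) + 2)"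
    using W by (intro sum_mono) simp
  also have "\<dots> \<le> (\<Sum>z\<in>R. 4 * M * (1 / \<bar>real_of_int z\<bar>) + 2)"
    using M by (intro sum_mono2) (auto simp: far_def R_def)
  also have "\<dots> = 4 * M * (\<Sum>z\<in>R. 1 / \<bar>real_of_int z\<bar>) + 2 * card R"
    by (simp add: sum.distrib sum_distrib_left)
  also have "\<dots> = 8 * real_of_int M * harm m + 4 * real m"
    by (simp add: R_def sum_inverse_abs_symmetric del: of_nat_mult)
  finally show "real (card {(z::int, u::int). \<bar>z\<bar> \<le> int m \<and> \<bar>u^2 - d * z^2\<bar> \<le> M \<and> 2 * M < d * z^2})
           \<le> 8 * real_of_int M * harm m + 4 * real m"
    unfolding eq .
qed

lemma card_small_norm_le:
  fixes d M :: int and m :: nat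
  assumes "d \<noteq> 0" "M \<ge> 1"
  shows "finite {(z::int, u::int). \<bar>z\<bar> \<le> int m \<and> \<bar>u^2 - d * z^2\<bar> \<le> M}"
    and "real (card {(z::int, u::int). \<bar>z\<bar> \<le> int m \<and> \<bar>u^2 - d * z^2\<bar> \<le> M})
           \<le> 27 * real_of_int M + 8 * real_of_int M * harm m + 4 * real m"
proof -
  let ?near = "{(z::int, u::int). \<bar>u^2 - d * z^2\<bar> \<le> M \<and> d * z^2 \<le> 2 * M}"
  let ?far = "{(z::int, u::int). \<bar>z\<bar> \<le> int m \<and> \<bar>u^2 - d * z^2\<bar> \<le> M \<and> 2 * M < d * z^2}"
  have sub: "{(z::int, u::int). \<bar>z\<bar> \<le> int m \<and> \<bar>u^2 - d * z^2\<bar> \<le> M} \<subseteq> ?near \<union> ?far"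
    by auto
  have fin: "finite (?near \<union> ?far)"
    using card_small_norm_near_le(1)[OF assms] card_small_norm_far_le(1)[OF assms(2)] by blast
  then show "finite {(z::int, u::int). \<bar>z\<bar> \<le> int m \<and> \<bar>u^2 - d * z^2\<bar> \<le> M}"
    using sub finite_subset by blast
  have "card {(z::int, u::int). \<bar>z\<bar> \<le> int m \<and> \<bar>u^2 - d * z^2\<bar> \<le> M} \<le> card ?near + card ?far"
    using card_mono[OF fin sub] card_Un_le[of ?near ?far] by linarith
  then have "real (card {(z::int, u::int). \<bar>z\<bar> \<le> int m \<and> \<bar>u^2 - d * z^2\<bar> \<le> M})
      \<le> real (card ?near) + real (card ?far)"
    by (simp only: of_nat_add[symmetric] of_nat_le_iff)
  then show "real (card {(z::int, u::int). \<bar>z\<bar> \<le> int m \<and> \<bar>u^2 - d * z^2\<bar> \<le> M})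
           \<le> 27 * real_of_int M + 8 * real_of_int M * harm m + 4 * real m"
    using card_small_norm_near_le(2)[OF assms] card_small_norm_far_le(2)[where d = d and m = m, OF assms(2)]
    by linarith
qed

section \<open>Discriminants that are squares up to a factor\<close>

lemma discriminant_norm_form:
  fixes A B d z :: int and n :: nat
  assumes d: "d \<noteq> 0" and A: "\<bar>A\<bar> \<le> int n" and B: "\<bar>B\<bar> \<le> int n"
    and z: "(A + B - 1)^2 - 4 * A * B = d * z^2"
  shows "(A - B)^2 - d * z^2 = 2 * (A + B) - 1" and "\<bar>z\<bar> \<le> 2 * int n + 1"
proof -
  define u s where "u = A - B" and "s = A + B"
  have norm: "u^2 - d * z^2 = 2 * s - 1"
    using z by (simp add: u_def s_def power2_eq_square algebra_simps)
  then show "(A - B)^2 - d * z^2 = 2 * (A + B) - 1" by (simp add: u_def s_def)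
  define K where "K = (2 * int n)^2"
  have s: "s \<le> 2 * int n" "- s \<le> 2 * int n" using A B by (simp_all add: s_def abs_le_iff)
  have "\<bar>u\<bar> \<le> 2 * int n" using A B by (simp add: u_def abs_le_iff)
  then have "u^2 \<le> K" using power2_le_iff_abs_le[of "2 * int n" u] by (simp add: K_def)
  moreover have "(2 * int n + 1)^2 = K + 4 * int n + 1" "0 \<le> K"
    by (simp_all add: K_def power2_eq_square algebra_simps)
  ultimately have "\<bar>d * z^2\<bar> \<le> (2 * int n + 1)^2"
    using norm s zero_le_power2[of u] unfolding abs_le_iff by (intro conjI) linarith+
  moreover have "z^2 \<le> \<bar>d * z^2\<bar>"
    using d mult_right_mono[of 1 "\<bar>d\<bar>" "z^2"] by (simp add: abs_mult int_one_le_iff_zero_less)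
  ultimately have "z^2 \<le> (2 * int n + 1)^2" by linarith
  then show "\<bar>z\<bar> \<le> 2 * int n + 1" using power2_le_iff_abs_le[of "2 * int n + 1" z] by simp
qed

lemma card_square_discriminant_le_card_small_norm:
  fixes d :: int and n :: nat
  assumes d: "d \<noteq> 0"
  shows "card {(A::int, B::int). \<bar>A\<bar> \<le> int n \<and> \<bar>B\<bar> \<le> int n \<and> (\<exists>z. (A + B - 1)^2 - 4 * A * B = d * z^2)}
    \<le> card {(z::int, u::int). \<bar>z\<bar> \<le> int (2 * n + 1) \<and> \<bar>u^2 - d * z^2\<bar> \<le> 4 * int n + 1}"
    (is "card ?S \<le> card ?P")
proof -
  \<comment> \<open>\<open>(z, u)\<close> determines \<open>(A, B)\<close>: \<open>u = A - B\<close> and \<open>u\<^sup>2 - d z\<^sup>2 = 2 (A + B) - 1\<close>.\<close>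
  define h where "h = (\<lambda>(z::int, u::int). let s = (u^2 - d * z^2 + 1) div 2 in ((s + u) div 2, (s - u) div 2))"
  have "?S \<subseteq> h ` ?P"
  proof
    fix p assume "p \<in> ?S"
    then obtain A B z where p: "p = (A, B)" and A: "\<bar>A\<bar> \<le> int n" and B: "\<bar>B\<bar> \<le> int n"
      and z: "(A + B - 1)^2 - 4 * A * B = d * z^2" by blast
    note norm = discriminant_norm_form[OF d A B z]
    have "p = h (z, A - B)" using norm(1) by (simp add: p h_def)
    moreover have "(z, A - B) \<in> ?P" using norm A B by (simp add: abs_le_iff)
    ultimately show "p \<in> h ` ?P" by blast
  qed
  moreover have "finite ?P" by (rule card_small_norm_le(1)[OF d]) simp
  ultimately show ?thesis by (meson card_image_le card_mono finite_imageI order_trans)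
qed

lemma abs_of_int_le_iff_le_nat_floor:
  assumes "N \<ge> 0"
  shows "\<bar>real_of_int A\<bar> \<le> N \<longleftrightarrow> \<bar>A\<bar> \<le> int (nat \<lfloor>N\<rfloor>)"
  using assms by (simp add: le_floor_iff)

lemma mult_one_plus_ln_mono:
  fixes x y :: real
  assumes "1 \<le> x" "x \<le> y"
  shows "x * (1 + ln x) \<le> y * (1 + ln y)"
  using assms by (intro mult_mono) auto

lemma count1_le:
  assumes N: "N \<ge> 1"
  shows "real (count1 N) \<le> 21 * (N * (1 + ln N))"
proof -
  define n where "n = nat \<lfloor>N\<rfloor>"
  have n: "1 \<le> real n" "real n \<le> N" using N by (simp_all add: n_def le_nat_floor)
  have "real (count1 N) = real (card {(A::int, B::int). \<bar>A\<bar> \<le> int n \<and> \<bar>B\<bar> \<le> int n \<and> (\<exists>m. - A * B = m^2)})"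
    using N by (simp add: count1_def n_def abs_of_int_le_iff_le_nat_floor rat_square_iff_int_square)
  also have "\<dots> \<le> 2 * real n + 1 + 18 * real n * harm n"
    by (rule card_neg_product_squares_le)
  also have "\<dots> \<le> 3 * real n * (1 + ln (real n)) + 18 * real n * (1 + ln (real n))"
  proof (rule add_mono)
    have "0 \<le> real n * ln (real n)" using n by simp
    moreover have "3 * real n * (1 + ln (real n)) = 3 * real n + 3 * (real n * ln (real n))"
      by (simp add: algebra_simps)
    ultimately show "2 * real n + 1 \<le> 3 * real n * (1 + ln (real n))" using n by linarith
    show "18 * real n * harm n \<le> 18 * real n * (1 + ln (real n))"
      using n harm_le_one_plus_ln[of n] by (intro mult_left_mono) auto
  qed
  also have "\<dots> = 21 * (real n * (1 + ln (real n)))" by (simp add: algebra_simps)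
  also have "\<dots> \<le> 21 * (N * (1 + ln N))" using n by (simp add: mult_one_plus_ln_mono)
  finally show ?thesis .
qed

lemma card_square_discriminant_le:
  fixes d :: int and n :: nat
  assumes d: "d \<noteq> 0" and n: "n \<ge> 1"
  shows "real (card {(A::int, B::int). \<bar>A\<bar> \<le> int n \<and> \<bar>B\<bar> \<le> int n \<and>
                       (\<exists>z. (A + B - 1)^2 - 4 * A * B = d * z^2)})
           \<le> 300 * (real n * (1 + ln (real n)))"
proof -
  define M H where "M = real_of_int (4 * int n + 1)" and "H = (harm (2 * n + 1) :: real)"
  have "real (card {(A::int, B::int). \<bar>A\<bar> \<le> int n \<and> \<bar>B\<bar> \<le> int n \<and>
                       (\<exists>z. (A + B - 1)^2 - 4 * A * B = d * z^2)})
      \<le> real (card {(z::int, u::int). \<bar>z\<bar> \<le> int (2 * n + 1) \<and> \<bar>u^2 - d * z^2\<bar> \<le> 4 * int n + 1})"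
    using card_square_discriminant_le_card_small_norm[OF d] by simp
  also have "\<dots> \<le> 27 * M + 8 * M * H + 4 * real (2 * n + 1)"
    using card_small_norm_le(2)[OF d, of "4 * int n + 1" "2 * n + 1"] unfolding M_def H_def by simp
  also have "\<dots> \<le> 300 * (real n * (1 + ln (real n)))"
  proof -
    have M: "M \<le> 5 * real n" using n by (simp add: M_def)
    have "8 * M * H \<le> 8 * (5 * real n) * (3 + ln (real n))"
      using M n harm_double_plus_one_le[of n] harm_nonneg[of "2 * n + 1"]
      by (intro mult_mono) (simp_all add: H_def M_def)
    also have "\<dots> = 120 * real n + 40 * (real n * ln (real n))" by (simp add: algebra_simps)
    finally have "8 * M * H \<le> 120 * real n + 40 * (real n * ln (real n))" .
    moreover have "0 \<le> real n * ln (real n)" "4 * real (2 * n + 1) \<le> 12 * real n" using n by simp_all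
    moreover have "300 * (real n * (1 + ln (real n))) = 300 * real n + 300 * (real n * ln (real n))"
      by (simp add: algebra_simps)
    ultimately show ?thesis using M by linarith
  qed
  finally show ?thesis .
qed

lemma count2_le:
  assumes N: "N \<ge> 1" and D: "D \<noteq> 0"
  shows "real (count2 D N) \<le> 300 * (N * (1 + ln N))"
proof -
  define n where "n = nat \<lfloor>N\<rfloor>"
  have n: "1 \<le> n" "real n \<le> N" using N by (simp_all add: n_def le_nat_floor)
  define d where "d = squarefree_part D"
  have d: "d \<noteq> 0" by (simp add: d_def)
  define S where "S = {(A::int, B::int). \<bar>A\<bar> \<le> int n \<and> \<bar>B\<bar> \<le> int n \<and>
                                        (\<exists>z. (A + B - 1)^2 - 4 * A * B = d * z^2)}"
  have "{(A::int, B::int). \<bar>real_of_int A\<bar> \<le> N \<and> \<bar>real_of_int B\<bar> \<le> N \<and>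
           rat_square (D * ((A + B - 1) ^ 2 - 4 * A * B))} \<subseteq> S"
    using N by (auto simp: S_def d_def n_def abs_of_int_le_iff_le_nat_floor rat_square_iff_int_square
                    elim!: square_cofactor_squarefree_part[OF D])
  moreover have "finite S"
    by (rule finite_subset[of _ "{-int n..int n} \<times> {-int n..int n}"]) (auto simp: S_def abs_le_iff)
  ultimately have "real (count2 D N) \<le> real (card S)" unfolding count2_def by (simp add: card_mono)
  also have "\<dots> \<le> 300 * (real n * (1 + ln (real n)))"
    unfolding S_def by (rule card_square_discriminant_le[OF d n(1)])
  also have "\<dots> \<le> 300 * (N * (1 + ln N))" using n by (simp add: mult_one_plus_ln_mono)
  finally show ?thesis .
qed

lemma le_mult_one_plus_ln_imp_le_powr:
  fixes x K \<epsilon> N :: real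
  assumes x: "x \<le> K * (N * (1 + ln N))" and K: "K \<ge> 0" and e: "\<epsilon> > 0" and N: "N \<ge> 1"
  shows "x \<le> K * (1 + 1 / \<epsilon>) * N powr (1 + \<epsilon>)"
proof -
  have N_powr: "N powr (1 + \<epsilon>) = N * N powr \<epsilon>" using N by (simp add: powr_add)
  have "N \<le> N powr (1 + \<epsilon>)" using N e powr_mono[of 1 "1 + \<epsilon>" N] by simp
  moreover have "N * ln N \<le> N * (N powr \<epsilon> / \<epsilon>)"
    using ln_powr_bound[OF N e] N by (intro mult_left_mono) auto
  ultimately have "N * (1 + ln N) \<le> (1 + 1 / \<epsilon>) * N powr (1 + \<epsilon>)"
    by (simp add: N_powr algebra_simps)
  with K have "K * (N * (1 + ln N)) \<le> K * ((1 + 1 / \<epsilon>) * N powr (1 + \<epsilon>))"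
    by (intro mult_left_mono)
  with x show ?thesis by (simp only: mult.assoc)
qed

theorem lemma4p2:
  shows "\<forall>\<epsilon>::real. \<epsilon> > 0 \<longrightarrow>
     (\<exists>C::real. \<forall>N::real. N \<ge> 1 \<longrightarrow> real (count1 N) \<le> C * N powr (1 + \<epsilon>))
   \<and> (\<exists>C::real. \<forall>D::int. \<forall>N::real. (\<nexists>k::int. D = k ^ 2) \<and> N \<ge> 1 \<longrightarrow>
         real (count2 D N) \<le> C * \<bar>real_of_int D\<bar> powr \<epsilon> * N powr (1 + \<epsilon>))"
proof (intro allI impI conjI)
  fix \<epsilon> :: real assume e: "\<epsilon> > 0"
  show "\<exists>C. \<forall>N. N \<ge> 1 \<longrightarrow> real (count1 N) \<le> C * N powr (1 + \<epsilon>)"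
    using le_mult_one_plus_ln_imp_le_powr[OF count1_le _ e] by auto
  show "\<exists>C. \<forall>D N. (\<nexists>k::int. D = k ^ 2) \<and> N \<ge> 1 \<longrightarrow>
          real (count2 D N) \<le> C * \<bar>real_of_int D\<bar> powr \<epsilon> * N powr (1 + \<epsilon>)"
  proof (intro exI allI impI)
    fix D :: int and N :: real assume "(\<nexists>k::int. D = k ^ 2) \<and> N \<ge> 1"
    then have D: "D \<noteq> 0" and N: "N \<ge> 1" by (auto intro: exI[of _ 0])
    define C where "C = 300 * (1 + 1 / \<epsilon>)"
    have "1 \<le> \<bar>real_of_int D\<bar> powr \<epsilon>" using D e by (intro ge_one_powr_ge_zero) auto
    have "real (count2 D N) \<le> C * N powr (1 + \<epsilon>)"
      unfolding C_def using le_mult_one_plus_ln_imp_le_powr[OF count2_le[OF N D] _ e N] by simp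
    also have "\<dots> \<le> C * N powr (1 + \<epsilon>) * \<bar>real_of_int D\<bar> powr \<epsilon>"
      using mult_left_mono[OF \<open>1 \<le> \<bar>real_of_int D\<bar> powr \<epsilon>\<close>, of "C * N powr (1 + \<epsilon>)"] e
      by (simp add: C_def)
    finally show "real (count2 D N) \<le> C * \<bar>real_of_int D\<bar> powr \<epsilon> * N powr (1 + \<epsilon>)"
      by (simp only: ac_simps)
  qed
qed

end
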